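(* Let $\chi>0$, $n\in\mathbb N\cup\{0\}$, and for $t\ge r_0$ and $z\in\mathbb C$ set $$\mathscr A_n(t;z)=\Big(|z|^{p_c-n}-(|t|^{-\chi}+|z|^2)^{\frac{p_c-n}2}\Big)z^n,\quad \mathscr B_n(t;z)=(|t|^{-\chi}+|z|^2)^{\frac{p_c-n}2}z^n,\quad \widetilde{\mathscr B}_n(t;z)=(|t|^{-\chi}+|z|^2)^{\frac{p_c-n}2}|z|^n.$$ Then, uniformly in $t\ge r_0$ and $z,w\in\mathbb C$: (i) if $p_c\in(0,2)$, then $|\mathscr A_n(t;z)|\lesssim|t|^{-\frac{p_c}2\chi}$; (ii) if $p_c\in(0,1)$, then $|\widetilde{\mathscr B}_n(t;z)-\widetilde{\mathscr B}_n(t;w)|+|\mathscr B_n(t;z)-\mathscr B_n(t;w)|\lesssim|z-w|^{p_c}$ and $|\mathscr A_0(t;z)z|\le|t|^{-p_c\chi}|z|^{1-p_c}$.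
   Context: $d\in\{1,2,3\}$, $\lambda<1/2$ (with $\lambda>-1/3$ if $d=3$), $p_c=2/(d(1-\lambda))$, and $r_0\ge1$ is a fixed number. $A\lesssim B$ means $A\le CB$ with $C$ independent of $t,z,w$. *)

theory Defs
  imports "HOL-Analysis.Analysis"
begin

definition p_crit :: "nat \<Rightarrow> real \<Rightarrow> real" where
  "p_crit d lam = 2 / (real d * (1 - lam))"

definition calA :: "real \<Rightarrow> real \<Rightarrow> nat \<Rightarrow> real \<Rightarrow> complex \<Rightarrow> complex" where
  "calA pc chi n t z =
     complex_of_real (cmod z powr (pc - real n)
        - (\<bar>t\<bar> powr (-chi) + (cmod z)^2) powr ((pc - real n) / 2)) * z ^ n"

definition calB :: "real \<Rightarrow> real \<Rightarrow> nat \<Rightarrow> real \<Rightarrow> complex \<Rightarrow> complex" where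
  "calB pc chi n t z =
     complex_of_real ((\<bar>t\<bar> powr (-chi) + (cmod z)^2) powr ((pc - real n) / 2)) * z ^ n"

definition calBt :: "real \<Rightarrow> real \<Rightarrow> nat \<Rightarrow> real \<Rightarrow> complex \<Rightarrow> real" where
  "calBt pc chi n t z =
     (\<bar>t\<bar> powr (-chi) + (cmod z)^2) powr ((pc - real n) / 2) * (cmod z) ^ n"

end

theory Submission
  imports Defs
begin

text \<open>
  With e = |t|^(-chi) and R = |z|^2, both bounds on A_n are bounds on |R^a - (e + R)^a| R^b:
  for e <= R the mean value theorem gains a factor e R^(a - 1), and for R < e each term is
  at most a power of e.

  For the Hoelder bounds, tilde B_n(t; z) = phi(|z|) and B_n(t; z) = phi(|z|) sgn(z)^n, where
  phi(r) = (e + r^2)^((p - n)/2) r^n satisfies |phi'(r)| <= (2n + 1) r^(p - 1) uniformly in e.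
  Hence the increments of phi are dominated by those of (2n + 1) r^p / p, which is p-Hoelder by
  subadditivity of r^p.  The angular factor costs |w|^p |sgn z - sgn w| <= 2 |z - w|^p when
  |w| <= |z|.
\<close>

lemma abs_powr_diff_le:
  fixes x y q :: real
  assumes "0 < x" "x \<le> y" "q \<le> 1"
  shows "\<bar>y powr q - x powr q\<bar> \<le> \<bar>q\<bar> * (y - x) * x powr (q - 1)"
proof (cases "x = y")
  case True then show ?thesis by simp
next
  case False
  with assms have "x < y" by simp
  have "\<exists>c. x < c \<and> c < y \<and> y powr q - x powr q = (y - x) * (q * c powr (q - 1))"
    by (rule MVT2[OF \<open>x < y\<close>]) (use assms in \<open>auto intro: has_real_derivative_powr\<close>)
  then obtain c where c: "x < c" "c < y" and eq: "y powr q - x powr q = (y - x) * (q * c powr (q - 1))"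
    by blast
  have "c powr (q - 1) \<le> x powr (q - 1)"
    using assms c by (intro powr_mono2') auto
  with c show ?thesis
    unfolding eq by (simp add: abs_mult mult_ac mult_left_mono)
qed

lemma powr_add_le_add_powr:
  fixes x y q :: real
  assumes "0 \<le> x" "0 \<le> y" "0 \<le> q" "q \<le> 1"
  shows "(x + y) powr q \<le> x powr q + y powr q"
proof (cases "x + y = 0")
  case True
  with assms show ?thesis by simp
next
  case False
  define s where "s = x + y"
  with False assms have s: "s > 0" by simp
  have "x / s \<le> (x / s) powr q" "y / s \<le> (y / s) powr q"
    using assms s powr_mono'[of q 1 "x / s"] powr_mono'[of q 1 "y / s"]
    by (simp_all add: s_def divide_simps)
  have "1 = x / s + y / s"
    using s by (simp add: s_def divide_simps)
  also have "\<dots> \<le> (x powr q + y powr q) / s powr q"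
    using \<open>x / s \<le> _\<close> \<open>y / s \<le> _\<close> assms s by (simp add: powr_divide add_divide_distrib)
  finally show ?thesis
    using s by (simp add: s_def divide_simps)
qed

lemma powr_diff_le_diff_powr:
  fixes a b q :: real
  assumes "0 \<le> b" "b \<le> a" "0 \<le> q" "q \<le> 1"
  shows "a powr q - b powr q \<le> (a - b) powr q"
  using powr_add_le_add_powr[of b "a - b" q] assms by simp

lemma sq_powr_half:
  fixes r x :: real
  assumes "0 \<le> r"
  shows "(r\<^sup>2) powr (x / 2) = r powr x"
proof (cases "r = 0")
  case False
  with assms have "r\<^sup>2 = r powr 2"
    using powr_realpow[of r 2] by simp
  then show ?thesis
    by (simp add: powr_powr)
qed simp

lemma add_sq_powr_le:
  fixes e r s :: real
  assumes "0 \<le> e" "0 < r" "s \<le> 0"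
  shows "(e + r\<^sup>2) powr (s / 2) \<le> r powr s"
proof -
  have "(e + r\<^sup>2) powr (s / 2) \<le> (r\<^sup>2) powr (s / 2)"
    using assms by (intro powr_mono2') auto
  also have "\<dots> = r powr s"
    using assms by (simp add: sq_powr_half)
  finally show ?thesis .
qed

lemma abs_diff_le_powr_diff_of_derivative_bound:
  fixes f :: "real \<Rightarrow> real" and p K x y :: real
  assumes p: "0 < p" and xy: "0 \<le> x" "x \<le> y" and cont: "continuous_on {x..y} f"
    and deriv: "\<And>r. x < r \<Longrightarrow> r < y \<Longrightarrow>
                  \<exists>D. (f has_real_derivative D) (at r) \<and> \<bar>D\<bar> \<le> K * r powr (p - 1)"
  shows "\<bar>f y - f x\<bar> \<le> K / p * (y powr p - x powr p)"
proof -
  have "s * (f y - f x) \<le> K / p * (y powr p - x powr p)" if s: "\<bar>s\<bar> = 1" for s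
  proof -
    define g where "g r = K / p * r powr p - s * f r" for r
    have "g x \<le> g y"
    proof (rule DERIV_nonneg_imp_increasing_open[OF \<open>x \<le> y\<close>])
      fix r assume r: "x < r" "r < y"
      then obtain D where D: "(f has_real_derivative D) (at r)" "\<bar>D\<bar> \<le> K * r powr (p - 1)"
        using deriv by blast
      have "(g has_real_derivative K / p * (p * r powr (p - 1)) - s * D) (at r)"
        unfolding g_def using D(1) has_real_derivative_powr[of r p] xy r
        by (intro DERIV_diff DERIV_cmult) auto
      moreover have "s * D \<le> K / p * (p * r powr (p - 1))"
        using D(2) s p abs_le_D1[of "s * D"] by (simp add: abs_mult)
      ultimately show "\<exists>E. (g has_real_derivative E) (at r) \<and> 0 \<le> E"
        by auto
    next
      have "continuous_on {x..y} (\<lambda>r. r powr p)"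
        by (intro continuous_on_powr' continuous_on_id continuous_on_const) (use xy p in auto)
      with cont show "continuous_on {x..y} g"
        unfolding g_def by (intro continuous_on_diff continuous_on_mult_left)
    qed
    then show ?thesis
      by (simp add: g_def algebra_simps)
  qed
  from this[of 1] this[of "-1"] show ?thesis
    by (simp add: abs_le_iff)
qed

lemma holder_of_derivative_bound:
  fixes f :: "real \<Rightarrow> real" and p K :: real
  assumes p: "0 < p" "p \<le> 1" and cont: "continuous_on {0..} f"
    and deriv: "\<And>r. 0 < r \<Longrightarrow> \<exists>D. (f has_real_derivative D) (at r) \<and> \<bar>D\<bar> \<le> K * r powr (p - 1)"
    and ab: "0 \<le> a" "0 \<le> b"
  shows "\<bar>f a - f b\<bar> \<le> K / p * \<bar>a - b\<bar> powr p"
proof -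
  obtain D where "\<bar>D\<bar> \<le> K * 1 powr (p - 1)"
    using deriv[of 1] by auto
  with p have "0 \<le> K / p"
    by simp
  have ordered: "\<bar>f y - f x\<bar> \<le> K / p * (y - x) powr p" if xy: "0 \<le> x" "x \<le> y" for x y
  proof -
    have "\<bar>f y - f x\<bar> \<le> K / p * (y powr p - x powr p)"
      using p xy deriv continuous_on_subset[OF cont, of "{x..y}"]
      by (intro abs_diff_le_powr_diff_of_derivative_bound) auto
    also have "\<dots> \<le> K / p * (y - x) powr p"
      using xy p \<open>0 \<le> K / p\<close> by (intro mult_left_mono powr_diff_le_diff_powr) auto
    finally show ?thesis .
  qed
  show ?thesis
  proof (cases "b \<le> a")
    case True
    with ordered[of b a] ab show ?thesis by simp
  next
    case False
    with ordered[of a b] ab show ?thesis by (simp add: abs_minus_commute)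
  qed
qed

definition radial_profile :: "real \<Rightarrow> real \<Rightarrow> nat \<Rightarrow> real \<Rightarrow> real" where
  "radial_profile e p n r = (e + r\<^sup>2) powr ((p - real n) / 2) * r ^ n"

lemma radial_profile_nonneg: "0 \<le> r \<Longrightarrow> 0 \<le> radial_profile e p n r"
  by (simp add: radial_profile_def)

lemma radial_profile_le_powr:
  assumes "0 \<le> e" "0 < n" "p \<le> real n" "0 \<le> r"
  shows "radial_profile e p n r \<le> r powr p"
proof (cases "r = 0")
  case True
  with assms show ?thesis by (simp add: radial_profile_def zero_power)
next
  case False
  with assms have "(e + r\<^sup>2) powr ((p - real n) / 2) \<le> r powr (p - real n)"
    using add_sq_powr_le[of e r "p - real n"] by simp
  with assms have "radial_profile e p n r \<le> r powr (p - real n) * r powr real n"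
    unfolding radial_profile_def using False by (simp add: powr_realpow mult_right_mono)
  then show ?thesis
    by (simp flip: powr_add)
qed

lemma continuous_on_radial_profile: "0 < e \<Longrightarrow> continuous_on A (radial_profile e p n)"
  unfolding radial_profile_def
  by (intro continuous_intros) (auto simp: add_nonneg_eq_0_iff)

lemma radial_profile_derivative_bound:
  assumes "0 \<le> e" "0 \<le> p" "p \<le> 1" "0 < r"
  shows "\<exists>D. (radial_profile e p n has_real_derivative D) (at r)
           \<and> \<bar>D\<bar> \<le> (2 * real n + 1) * r powr (p - 1)"
proof -
  define D1 where "D1 = (p - real n) * (e + r\<^sup>2) powr ((p - real n) / 2 - 1) * r ^ (n + 1)"
  define D2 where "D2 = real n * (e + r\<^sup>2) powr ((p - real n) / 2) * r ^ (n - 1)"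
  have "0 < e + r\<^sup>2"
    using assms by (simp add: add_nonneg_pos)
  then have "(radial_profile e p n has_real_derivative D1 + D2) (at r)"
    unfolding radial_profile_def D1_def D2_def
    by (auto intro!: derivative_eq_intros simp: algebra_simps) (simp add: field_simps)
  moreover have "\<bar>D1\<bar> \<le> (real n + 1) * r powr (p - 1)"
  proof -
    have "(p - real n) / 2 - 1 = (p - real n - 2) / 2"
      by (simp add: field_simps)
    then have "\<bar>D1\<bar> = \<bar>p - real n\<bar> * ((e + r\<^sup>2) powr ((p - real n - 2) / 2) * r powr (real n + 1))"
      using assms by (simp only: D1_def abs_mult) (simp add: powr_add powr_realpow)
    also have "\<dots> \<le> \<bar>p - real n\<bar> * (r powr (p - real n - 2) * r powr (real n + 1))"
      using assms add_sq_powr_le[of e r "p - real n - 2"]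
      by (intro mult_left_mono mult_right_mono) simp_all
    also have "\<dots> = \<bar>p - real n\<bar> * r powr (p - 1)"
      by (simp flip: powr_add)
    also have "\<dots> \<le> (real n + 1) * r powr (p - 1)"
      using assms by (intro mult_right_mono) auto
    finally show ?thesis .
  qed
  moreover have "\<bar>D2\<bar> \<le> real n * r powr (p - 1)"
  proof (cases "n = 0")
    case False
    have "r ^ (n - 1) = r powr (real n - 1)"
      using assms False powr_realpow[of r "n - 1"] by simp
    then have "\<bar>D2\<bar> = real n * ((e + r\<^sup>2) powr ((p - real n) / 2) * r powr (real n - 1))"
      using assms by (simp add: D2_def abs_mult)
    also have "\<dots> \<le> real n * (r powr (p - real n) * r powr (real n - 1))"
      using assms False add_sq_powr_le[of e r "p - real n"]
      by (intro mult_left_mono mult_right_mono) simp_all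
    also have "\<dots> = real n * r powr (p - 1)"
      by (simp flip: powr_add)
    finally show ?thesis .
  qed (simp add: D2_def)
  ultimately show ?thesis
    by (intro exI[of _ "D1 + D2"]) (auto simp: algebra_simps intro: abs_triangle_ineq[THEN order_trans])
qed

lemma radial_profile_holder:
  assumes "0 < e" "0 < p" "p \<le> 1" "0 \<le> a" "0 \<le> b"
  shows "\<bar>radial_profile e p n a - radial_profile e p n b\<bar>
           \<le> (2 * real n + 1) / p * \<bar>a - b\<bar> powr p"
  using assms
  by (intro holder_of_derivative_bound continuous_on_radial_profile radial_profile_derivative_bound)
    auto

lemma norm_mult_sgn_diff_le:
  fixes z w :: "'a::real_normed_vector"
  assumes "norm w \<le> norm z"
  shows "norm w * norm (sgn z - sgn w) \<le> 2 * norm (z - w)"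
proof (cases "w = 0")
  case False
  with assms have "z \<noteq> 0" by auto
  have "norm w *\<^sub>R (sgn z - sgn w) = (z - w) - (norm z - norm w) *\<^sub>R sgn z"
    using \<open>z \<noteq> 0\<close> False by (simp add: sgn_div_norm algebra_simps)
  then have "norm w * norm (sgn z - sgn w) \<le> norm (z - w) + \<bar>norm z - norm w\<bar> * norm (sgn z)"
    by (metis norm_scaleR norm_ge_zero abs_of_nonneg norm_triangle_ineq4)
  also have "\<dots> \<le> 2 * norm (z - w)"
    using norm_triangle_ineq3[of z w] by (simp add: norm_sgn)
  finally show ?thesis .
qed simp

lemma powr_mult_norm_sgn_diff_le:
  fixes z w :: "'a::real_normed_vector" and p :: real
  assumes le: "norm w \<le> norm z" and p: "0 \<le> p" "p \<le> 1"
  shows "norm w powr p * norm (sgn z - sgn w) \<le> 2 * norm (z - w) powr p"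
proof -
  consider "z = w" | "norm w \<le> norm (z - w)" | "z \<noteq> w" "norm (z - w) < norm w"
    by fastforce
  then show ?thesis
  proof cases
    case 2
    have "norm (sgn z) \<le> 1" "norm (sgn w) \<le> 1"
      by (simp_all add: norm_sgn)
    then have "norm (sgn z - sgn w) \<le> 2"
      using norm_triangle_ineq4[of "sgn z" "sgn w"] by linarith
    moreover have "norm w powr p \<le> norm (z - w) powr p"
      using 2 p by (intro powr_mono2) auto
    ultimately show ?thesis
      using mult_mono[of "norm w powr p" "norm (z - w) powr p" "norm (sgn z - sgn w)" 2]
      by (simp add: mult.commute)
  next
    case 3
    then have "norm w powr p * norm (sgn z - sgn w)
        = norm w powr (p - 1) * (norm w * norm (sgn z - sgn w))"
      by (simp add: powr_diff)
    also have "\<dots> \<le> norm (z - w) powr (p - 1) * (2 * norm (z - w))"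
      by (rule mult_mono[OF _ norm_mult_sgn_diff_le[OF le]]) (use 3 p in \<open>auto intro: powr_mono2'\<close>)
    also have "\<dots> = 2 * norm (z - w) powr p"
      using 3 by (simp add: powr_diff)
    finally show ?thesis .
  qed simp
qed

lemma of_real_norm_mult_sgn_power: "complex_of_real (cmod z) ^ n * sgn z ^ n = z ^ n"
  by (cases "z = 0") (simp_all add: sgn_eq flip: power_mult_distrib)

lemma radial_profile_norm_holder:
  fixes z w :: "'a::real_normed_vector"
  assumes "0 < e" "0 < p" "p \<le> 1"
  shows "\<bar>radial_profile e p n (norm z) - radial_profile e p n (norm w)\<bar>
           \<le> (2 * real n + 1) / p * norm (z - w) powr p"
proof -
  have "\<bar>radial_profile e p n (norm z) - radial_profile e p n (norm w)\<bar>
      \<le> (2 * real n + 1) / p * \<bar>norm z - norm w\<bar> powr p"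
    using assms by (intro radial_profile_holder) auto
  also have "\<dots> \<le> (2 * real n + 1) / p * norm (z - w) powr p"
    using assms norm_triangle_ineq3[of z w] by (intro mult_left_mono powr_mono2) auto
  finally show ?thesis .
qed

lemma radial_profile_mult_norm_sgn_power_diff_le:
  fixes z w :: complex
  assumes le: "cmod w \<le> cmod z" and e: "0 \<le> e" and p: "0 \<le> p" "p \<le> 1"
  shows "radial_profile e p n (cmod w) * cmod (sgn z ^ n - sgn w ^ n) \<le> 2 * real n * cmod (z - w) powr p"
proof (cases "n = 0")
  case False
  have "radial_profile e p n (cmod w) * cmod (sgn z ^ n - sgn w ^ n)
      \<le> cmod w powr p * (real n * cmod (sgn z - sgn w))"
    using e p False
    by (intro mult_mono radial_profile_le_powr norm_power_diff) (auto simp: norm_sgn)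
  also have "\<dots> \<le> real n * (2 * cmod (z - w) powr p)"
    using powr_mult_norm_sgn_diff_le[OF le] p by (simp add: mult.left_commute mult_left_mono)
  finally show ?thesis
    by simp
qed simp

lemma radial_profile_sgn_power_holder:
  fixes z w :: complex
  assumes e: "0 < e" and p: "0 < p" "p \<le> 1"
  shows "cmod (of_real (radial_profile e p n (cmod z)) * sgn z ^ n
              - of_real (radial_profile e p n (cmod w)) * sgn w ^ n)
           \<le> ((2 * real n + 1) / p + 2 * real n) * cmod (z - w) powr p"
    (is "?lhs z w \<le> ?rhs z w")
proof -
  let ?\<phi> = "radial_profile e p n"
  have "?lhs z w \<le> ?rhs z w" if le: "cmod w \<le> cmod z" for z w
  proof -
    have "?lhs z w = cmod (of_real (?\<phi> (cmod z) - ?\<phi> (cmod w)) * sgn z ^ n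
                            + of_real (?\<phi> (cmod w)) * (sgn z ^ n - sgn w ^ n))"
      by (simp add: algebra_simps)
    also have "\<dots> \<le> \<bar>?\<phi> (cmod z) - ?\<phi> (cmod w)\<bar> * cmod (sgn z ^ n)
                  + ?\<phi> (cmod w) * cmod (sgn z ^ n - sgn w ^ n)"
      by (rule norm_triangle_ineq[THEN order_trans])
        (simp add: norm_mult radial_profile_nonneg del: of_real_diff)
    also have "\<dots> \<le> \<bar>?\<phi> (cmod z) - ?\<phi> (cmod w)\<bar> + ?\<phi> (cmod w) * cmod (sgn z ^ n - sgn w ^ n)"
      by (simp add: norm_power norm_sgn mult_left_le power_le_one)
    finally show ?thesis
      using radial_profile_norm_holder[OF assms, of n z w]
        radial_profile_mult_norm_sgn_power_diff_le[OF le, of e p n] assms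
      by (simp add: algebra_simps)
  qed
  from this[of z w] this[of w z] show ?thesis
    by (cases "cmod w \<le> cmod z") (simp_all add: norm_minus_commute)
qed

lemma abs_powr_shift_diff_mult_powr_le:
  fixes e R a b :: real
  assumes e: "0 < e" and R: "0 < R" and b: "0 \<le> b" and ab: "0 < a + b" "a + b < 1"
  shows "\<bar>R powr a - (e + R) powr a\<bar> * R powr b \<le> (\<bar>a\<bar> + 3) * e powr (a + b)"
proof (cases "e \<le> R")
  case True
  have "\<bar>R powr a - (e + R) powr a\<bar> * R powr b \<le> \<bar>a\<bar> * e * R powr (a - 1) * R powr b"
    using abs_powr_diff_le[of R "e + R" a] R e ab b
    by (intro mult_right_mono) (auto simp: abs_minus_commute)
  also have "\<dots> = \<bar>a\<bar> * e * R powr (a + b - 1)"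
    by (simp add: mult.assoc diff_add_eq flip: powr_add)
  also have "\<dots> \<le> \<bar>a\<bar> * e * e powr (a + b - 1)"
    using True e ab by (intro mult_left_mono powr_mono2') auto
  also have "\<dots> = \<bar>a\<bar> * e powr (a + b)"
    using e by (simp add: powr_diff)
  also have "\<dots> \<le> (\<bar>a\<bar> + 3) * e powr (a + b)"
    by (intro mult_right_mono) auto
  finally show ?thesis .
next
  case False
  have "R powr a * R powr b \<le> e powr (a + b)"
    using False R ab by (simp add: powr_mono2 flip: powr_add)
  moreover have "(e + R) powr a * R powr b \<le> 2 * e powr (a + b)"
  proof -
    have "(e + R) powr a \<le> 2 * e powr a"
    proof (cases "0 \<le> a")
      case True
      have "(e + R) powr a \<le> (2 * e) powr a"
        using True False R by (intro powr_mono2) auto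
      also have "\<dots> = 2 powr a * e powr a"
        using e by (simp add: powr_mult)
      also have "\<dots> \<le> 2 * e powr a"
        using True ab b powr_mono[of a 1 2] by (intro mult_right_mono) auto
      finally show ?thesis .
    next
      case neg: False
      have "(e + R) powr a \<le> e powr a"
        using neg R e by (intro powr_mono2') auto
      then show ?thesis
        using powr_ge_zero[of e a] by linarith
    qed
    moreover have "R powr b \<le> e powr b"
      using False R b by (intro powr_mono2) auto
    ultimately have "(e + R) powr a * R powr b \<le> 2 * e powr a * e powr b"
      by (intro mult_mono) auto
    then show ?thesis
      by (simp add: powr_add mult.assoc)
  qed
  moreover have "\<bar>R powr a - (e + R) powr a\<bar> * R powr b \<le> (R powr a + (e + R) powr a) * R powr b"
    by (intro mult_right_mono) (auto simp: abs_le_iff)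
  ultimately have "\<bar>R powr a - (e + R) powr a\<bar> * R powr b \<le> 3 * e powr (a + b)"
    by (simp add: distrib_right)
  also have "\<dots> \<le> (\<bar>a\<bar> + 3) * e powr (a + b)"
    by (intro mult_right_mono) auto
  finally show ?thesis .
qed

lemma abs_powr_shift_diff_mult_powr_half_le:
  fixes e R c :: real
  assumes e: "0 < e" and R: "0 < R" and c: "0 \<le> c" "c \<le> 1 / 2"
  shows "\<bar>R powr c - (e + R) powr c\<bar> * R powr (1 / 2) \<le> e powr (2 * c) * R powr (1 / 2 - c)"
proof (cases "e \<le> R")
  case True
  have "\<bar>R powr c - (e + R) powr c\<bar> * R powr (1 / 2) \<le> c * e * R powr (c - 1) * R powr (1 / 2)"
    using abs_powr_diff_le[of R "e + R" c] R e c
    by (intro mult_right_mono) (auto simp: abs_minus_commute)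
  also have "\<dots> = c * (e * R powr (2 * c - 1)) * R powr (1 / 2 - c)"
    by (simp add: mult_ac flip: powr_add)
  also have "\<dots> \<le> 1 * (e * e powr (2 * c - 1)) * R powr (1 / 2 - c)"
    using True e c by (intro mult_right_mono mult_mono mult_left_mono powr_mono2') auto
  also have "\<dots> = e powr (2 * c) * R powr (1 / 2 - c)"
    using e by (simp add: powr_diff)
  finally show ?thesis .
next
  case False
  have "R powr c \<le> (e + R) powr c" "(e + R) powr c \<le> e powr c + R powr c"
    using e R c by (auto intro: powr_mono2 powr_add_le_add_powr)
  then have "\<bar>R powr c - (e + R) powr c\<bar> \<le> e powr c"
    by (simp add: abs_le_iff)
  then have "\<bar>R powr c - (e + R) powr c\<bar> * R powr (1 / 2) \<le> e powr c * R powr (1 / 2)"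
    by (rule mult_right_mono) simp
  also have "\<dots> = e powr c * (R powr c * R powr (1 / 2 - c))"
    by (simp flip: powr_add)
  also have "\<dots> \<le> e powr c * (e powr c * R powr (1 / 2 - c))"
    using False R c by (intro mult_left_mono mult_right_mono powr_mono2) auto
  also have "\<dots> = e powr (2 * c) * R powr (1 / 2 - c)"
    by (simp add: mult.assoc flip: powr_add)
  finally show ?thesis .
qed

lemma norm_calA_le:
  assumes t: "t \<noteq> 0" and p: "0 < p" "p < 2"
  shows "cmod (calA p chi n t z) \<le> (real n + 4) * \<bar>t\<bar> powr (- (p / 2) * chi)"
proof -
  define e where "e = \<bar>t\<bar> powr (- chi)"
  have e: "0 < e" and e_powr: "e powr (p / 2) = \<bar>t\<bar> powr (- (p / 2) * chi)"
    using t by (simp_all add: e_def powr_powr mult_ac)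
  have "cmod (calA p chi n t z) \<le> (real n + 4) * e powr (p / 2)"
  proof (cases "z = 0")
    case True
    with e show ?thesis
      by (cases "n = 0") (simp_all add: calA_def e_def zero_power)
  next
    case False
    define R where "R = (cmod z)\<^sup>2"
    have R: "0 < R"
      using False by (simp add: R_def)
    have "cmod (calA p chi n t z)
        = \<bar>R powr ((p - real n) / 2) - (e + R) powr ((p - real n) / 2)\<bar> * R powr (real n / 2)"
      by (simp add: calA_def R_def e_def norm_mult norm_power sq_powr_half powr_realpow False
          del: of_real_diff)
    also have "\<dots> \<le> (\<bar>(p - real n) / 2\<bar> + 3) * e powr ((p - real n) / 2 + real n / 2)"
      using e R p by (intro abs_powr_shift_diff_mult_powr_le) (auto simp: field_simps)
    also have "(p - real n) / 2 + real n / 2 = p / 2"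
      by (simp add: field_simps)
    also have "(\<bar>(p - real n) / 2\<bar> + 3) * e powr (p / 2) \<le> (real n + 4) * e powr (p / 2)"
      using p by (intro mult_right_mono) (auto simp: abs_le_iff)
    finally show ?thesis .
  qed
  with e_powr show ?thesis
    by simp
qed

lemma norm_calA0_mult_le:
  assumes t: "t \<noteq> 0" and p: "0 < p" "p < 1"
  shows "cmod (calA p chi 0 t z * z) \<le> \<bar>t\<bar> powr (- p * chi) * cmod z powr (1 - p)"
proof (cases "z = 0")
  case False
  define e where "e = \<bar>t\<bar> powr (- chi)"
  define R where "R = (cmod z)\<^sup>2"
  have e: "0 < e" and R: "0 < R"
    using t False by (simp_all add: e_def R_def)
  have "cmod (calA p chi 0 t z * z) = \<bar>R powr (p / 2) - (e + R) powr (p / 2)\<bar> * R powr (1 / 2)"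
    using sq_powr_half[of "cmod z" 1]
    by (simp add: calA_def R_def e_def norm_mult sq_powr_half del: of_real_diff)
  also have "\<dots> \<le> e powr (2 * (p / 2)) * R powr (1 / 2 - p / 2)"
    using e R p by (intro abs_powr_shift_diff_mult_powr_half_le) auto
  also have "\<dots> = \<bar>t\<bar> powr (- p * chi) * cmod z powr (1 - p)"
    using sq_powr_half[of "cmod z" "1 - p"]
    by (simp add: e_def R_def powr_powr diff_divide_distrib mult.commute)
  finally show ?thesis .
qed simp

lemma calB_eq_radial_profile:
  "calB p chi n t z = of_real (radial_profile (\<bar>t\<bar> powr (- chi)) p n (cmod z)) * sgn z ^ n"
  by (simp add: calB_def radial_profile_def of_real_norm_mult_sgn_power flip: mult.assoc)

lemma calBt_eq_radial_profile:
  "calBt p chi n t z = radial_profile (\<bar>t\<bar> powr (- chi)) p n (cmod z)"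
  by (simp add: calBt_def radial_profile_def)

lemma calB_calBt_holder:
  assumes "t \<noteq> 0" "0 < p" "p \<le> 1"
  shows "\<bar>calBt p chi n t z - calBt p chi n t w\<bar> + cmod (calB p chi n t z - calB p chi n t w)
           \<le> (2 * ((2 * real n + 1) / p) + 2 * real n) * cmod (z - w) powr p"
proof -
  have "0 < \<bar>t\<bar> powr (- chi)"
    using assms by simp
  with assms have "\<bar>calBt p chi n t z - calBt p chi n t w\<bar> + cmod (calB p chi n t z - calB p chi n t w)
      \<le> (2 * real n + 1) / p * cmod (z - w) powr p
        + ((2 * real n + 1) / p + 2 * real n) * cmod (z - w) powr p"
    unfolding calB_eq_radial_profile calBt_eq_radial_profile
    by (intro add_mono radial_profile_norm_holder radial_profile_sgn_power_holder)
  then show ?thesis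
    by (simp add: algebra_simps)
qed

theorem lemma4p4:
  fixes d :: nat and lam r0 chi :: real and n :: nat
  assumes "d \<in> {1, 2, 3}"
    and "lam < 1/2"
    and "d = 3 \<longrightarrow> lam > - 1/3"
    and "r0 \<ge> 1"
    and "chi > 0"
  shows "(p_crit d lam \<in> {0<..<2} \<longrightarrow>
            (\<exists>C. \<forall>t z. t \<ge> r0 \<longrightarrow>
               cmod (calA (p_crit d lam) chi n t z) \<le> C * \<bar>t\<bar> powr (- (p_crit d lam / 2) * chi)))
       \<and> (p_crit d lam \<in> {0<..<1} \<longrightarrow>
            (\<exists>C. \<forall>t z w. t \<ge> r0 \<longrightarrow>
               \<bar>calBt (p_crit d lam) chi n t z - calBt (p_crit d lam) chi n t w\<bar>
               + cmod (calB (p_crit d lam) chi n t z - calB (p_crit d lam) chi n t w)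
               \<le> C * cmod (z - w) powr (p_crit d lam))
          \<and> (\<forall>t z. t \<ge> r0 \<longrightarrow>
               cmod (calA (p_crit d lam) chi 0 t z * z)
               \<le> \<bar>t\<bar> powr (- (p_crit d lam) * chi) * cmod z powr (1 - p_crit d lam)))"
proof -
  have "t \<noteq> 0" if "t \<ge> r0" for t
    using that \<open>r0 \<ge> 1\<close> by auto
  then show ?thesis
    by (intro conjI impI allI exI; rule norm_calA_le calB_calBt_holder norm_calA0_mult_le) auto
qed

end
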